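(* Let $u$ and $v$ be vertices of $G$ and let $P(u,v)=(u=x_1,\dots,x_p=v)$ be the path from $u$ to $v$ in $T$. Suppose the routing steps of a single case of the routing algorithm are executed (when routing from $u$ to $v$) and vertices $w_1$ and $w_2$ are visited. Then there are indices $1\le i_1\le i_2\le p$ such that $w_1=x_{i_1}$ and $w_2=x_{i_2}$.
   Context: Let $T$ be a rooted tree on $n$ vertices with positive edge weights; $P(a,b)$ is the path in $T$ from $a$ to $b$ and $\delta_T(a,b)$ its weight. Ancestor/descendant refer to $T$, and a vertex counts as its own ancestor and descendant; "deepest"/"highest" refer to depth in $T$. $T_v$ is the subtree of $T$ rooted at $v$. For every non-leaf vertex $v$ fix a child $c_1(v)$ with $|T_{c_1(v)}|$ maximal; edges $(v,c_1(v))$ are leftmost. A subtree $R$ of $T$ is rooted at its vertex closest to the root, $rt(R)$, and inherits the leftmost labelling; $R_v$ is the subtree of $R$ rooted at $v$. $P_R(v)$ is the longest downward path from $v$ in $R$ using only leftmost edges, with last vertex $l(v)$; $l(R):=l(rt(R))$. A vertex $v$ of $R$ is $d$-balanced if $|R_{c_1(v)}|\le |R|-d$ (with $|R_{c_1(v)}|=0$ if $c_1(v)$ is undefined or not in $R$); $b_d(v)$ is the first $d$-balanced vertex on $P_R(v)$, or NULL. $CV(R,d)=\emptyset$ if $b_d(rt(R))$ is NULL, else $\{b\}\cup\bigcup_w CV(R_w,d)$ with $b=b_d(rt(R))$ and $w$ ranging over children of $b$ in $R$. Fix an integer $k\ge4$; for a subtree $R$ with $m$ vertices, $C_R=V(R)$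 if $k\ge m/2-1$, else $C_R=CV(R,m/k)\cup\{l(R),rt(R)\}$. Canonical subtrees: $T$ is canonical; if $R$ is canonical, each component of $R$ minus $C_R$ is canonical. Each vertex $v$ lies in $C_R$ for exactly one canonical $R$, denoted $T^v$. The spanner $G$ has vertex set $V(T)$ and edges: all edges of $T$, and all pairs of distinct vertices of $C_R$ for every canonical $R$; edge $(a,b)$ has weight $\delta_T(a,b)$. Routing algorithm from current vertex $u$ to destination $v$: Case 0: if $v$ is adjacent to $u$, move to $v$. Case 1: $u$ is an ancestor of $v$; let $X$ be the vertices of $C_{T^u}$ that are ancestors of $v$, $x$ the deepest; move to $x$, then to the child of $x$ that is an ancestor of $v$. Case 2: $u$ is a descendant of $v$; let $X$ be the vertices of $C_{T^u}$ that are descendants of $v$ and ancestors of $u$, $x$ the highest; move to $x$, then to the parent of $x$. Case 3: $u$ is neither; let $X$ be the vertices of $C_{T^u}$ that are ancestors of $v$ but not of $u$, and $Y$ those that are ancestors of $u$ but not of $v$, $y$ the highest vertex of $Y$. Case 3 a): $X=\emptyset$: move to $y$, then to the parent of $y$. Case 3 b): $X\neq\emptyset$: with $x$ the deepest vertex of $X$ and $x'$ the child of $x$ that is an ancestor of $v$, move to $x$, then to $x'$. (Moving to the current vertex means staying.) *)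

theory Defs
  imports Main "HOL.Real"
begin

text \<open>A rooted tree is given by a finite vertex set V, a root r and a parent
function par (the value of par at r is irrelevant).  Edge weights are irrelevant for the routing decisions
and for the claim, and are therefore not modelled.\<close>

definition is_rooted_tree :: "'a set \<Rightarrow> 'a \<Rightarrow> ('a \<Rightarrow> 'a) \<Rightarrow> bool" where
  "is_rooted_tree V r par \<longleftrightarrow> finite V \<and> r \<in> V \<and>
     (\<forall>v\<in>V. v \<noteq> r \<longrightarrow> par v \<in> V) \<and> (\<forall>v\<in>V. \<exists>k. (par ^^ k) v = r)"

definition depth :: "'a \<Rightarrow> ('a \<Rightarrow> 'a) \<Rightarrow> 'a \<Rightarrow> nat" where
  "depth r par v = (LEAST k. (par ^^ k) v = r)"

definition anc :: "'a set \<Rightarrow> 'a \<Rightarrow> ('a \<Rightarrow> 'a) \<Rightarrow> 'a \<Rightarrow> 'a \<Rightarrow> bool" where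
  "anc V r par a b \<longleftrightarrow> b \<in> V \<and> (\<exists>k\<le>depth r par b. (par ^^ k) b = a)"

definition is_child :: "'a set \<Rightarrow> 'a \<Rightarrow> ('a \<Rightarrow> 'a) \<Rightarrow> 'a \<Rightarrow> 'a \<Rightarrow> bool" where
  "is_child V r par c p \<longleftrightarrow> c \<in> V \<and> c \<noteq> r \<and> par c = p"

definition tree_adj :: "'a set \<Rightarrow> 'a \<Rightarrow> ('a \<Rightarrow> 'a) \<Rightarrow> 'a \<Rightarrow> 'a \<Rightarrow> bool" where
  "tree_adj V r par a b \<longleftrightarrow> is_child V r par a b \<or> is_child V r par b a"

definition subtree :: "'a set \<Rightarrow> 'a \<Rightarrow> ('a \<Rightarrow> 'a) \<Rightarrow> 'a \<Rightarrow> 'a set" where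
  "subtree V r par v = {w. anc V r par v w}"

definition leftmost_choice :: "'a set \<Rightarrow> 'a \<Rightarrow> ('a \<Rightarrow> 'a) \<Rightarrow> ('a \<Rightarrow> 'a) \<Rightarrow> bool" where
  "leftmost_choice V r par c1 \<longleftrightarrow> (\<forall>v\<in>V. (\<exists>c. is_child V r par c v) \<longrightarrow>
     is_child V r par (c1 v) v \<and>
     (\<forall>c. is_child V r par c v \<longrightarrow> card (subtree V r par c) \<le> card (subtree V r par (c1 v))))"

definition on_path :: "'a set \<Rightarrow> 'a \<Rightarrow> ('a \<Rightarrow> 'a) \<Rightarrow> 'a \<Rightarrow> 'a \<Rightarrow> 'a \<Rightarrow> bool" where
  "on_path V r par a b w \<longleftrightarrow> (anc V r par w a \<or> anc V r par w b) \<and>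
     (\<forall>z. anc V r par z a \<and> anc V r par z b \<longrightarrow> anc V r par z w)"

text \<open>A vertex set S is connected in T iff it contains the tree path between
any two of its vertices; subtrees of T are the nonempty connected vertex sets.\<close>
definition tconnected :: "'a set \<Rightarrow> 'a \<Rightarrow> ('a \<Rightarrow> 'a) \<Rightarrow> 'a set \<Rightarrow> bool" where
  "tconnected V r par S \<longleftrightarrow> (\<forall>a\<in>S. \<forall>b\<in>S. \<forall>w. on_path V r par a b w \<longrightarrow> w \<in> S)"

definition rt :: "'a \<Rightarrow> ('a \<Rightarrow> 'a) \<Rightarrow> 'a set \<Rightarrow> 'a" where
  "rt r par S = (THE x. x \<in> S \<and> (\<forall>y\<in>S. depth r par x \<le> depth r par y))"

definition sub_in :: "'a set \<Rightarrow> 'a \<Rightarrow> ('a \<Rightarrow> 'a) \<Rightarrow> 'a set \<Rightarrow> 'a \<Rightarrow> 'a set" where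
  "sub_in V r par S v = {w\<in>S. anc V r par v w}"

definition lm_in :: "'a set \<Rightarrow> 'a \<Rightarrow> ('a \<Rightarrow> 'a) \<Rightarrow> ('a \<Rightarrow> 'a) \<Rightarrow> 'a set \<Rightarrow> 'a \<Rightarrow> bool" where
  "lm_in V r par c1 S v \<longleftrightarrow> is_child V r par (c1 v) v \<and> c1 v \<in> S"

text \<open>P_R(v) = (c1^0 v, ..., c1^len v); its last vertex is l(v).\<close>
definition pathlen :: "'a set \<Rightarrow> 'a \<Rightarrow> ('a \<Rightarrow> 'a) \<Rightarrow> ('a \<Rightarrow> 'a) \<Rightarrow> 'a set \<Rightarrow> 'a \<Rightarrow> nat" where
  "pathlen V r par c1 S v = (LEAST j. \<not> lm_in V r par c1 S ((c1 ^^ j) v))"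

definition lend :: "'a set \<Rightarrow> 'a \<Rightarrow> ('a \<Rightarrow> 'a) \<Rightarrow> ('a \<Rightarrow> 'a) \<Rightarrow> 'a set \<Rightarrow> 'a \<Rightarrow> 'a" where
  "lend V r par c1 S v = (c1 ^^ pathlen V r par c1 S v) v"

definition balanced :: "'a set \<Rightarrow> 'a \<Rightarrow> ('a \<Rightarrow> 'a) \<Rightarrow> ('a \<Rightarrow> 'a) \<Rightarrow> 'a set \<Rightarrow> real \<Rightarrow> 'a \<Rightarrow> bool" where
  "balanced V r par c1 S d v \<longleftrightarrow>
     real (if lm_in V r par c1 S v then card (sub_in V r par S (c1 v)) else 0) \<le> real (card S) - d"

text \<open>b_d(v), with None for NULL\<close>
definition bfirst :: "'a set \<Rightarrow> 'a \<Rightarrow> ('a \<Rightarrow> 'a) \<Rightarrow> ('a \<Rightarrow> 'a) \<Rightarrow> 'a set \<Rightarrow> real \<Rightarrow> 'a \<Rightarrow> 'a option" where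
  "bfirst V r par c1 S d v =
     (if \<exists>j\<le>pathlen V r par c1 S v. balanced V r par c1 S d ((c1 ^^ j) v)
      then Some ((c1 ^^ (LEAST j. j \<le> pathlen V r par c1 S v \<and> balanced V r par c1 S d ((c1 ^^ j) v))) v)
      else None)"

text \<open>CV(R,d), as the least set satisfying the (well-founded) recursion.\<close>
inductive in_CV :: "'a set \<Rightarrow> 'a \<Rightarrow> ('a \<Rightarrow> 'a) \<Rightarrow> ('a \<Rightarrow> 'a) \<Rightarrow> 'a set \<Rightarrow> real \<Rightarrow> 'a \<Rightarrow> bool"
  for V r par c1 where
  cv_here: "bfirst V r par c1 S d (rt r par S) = Some b \<Longrightarrow> in_CV V r par c1 S d b"
| cv_rec: "bfirst V r par c1 S d (rt r par S) = Some b \<Longrightarrow> is_child V r par w b \<Longrightarrow> w \<in> S \<Longrightarrow>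
     in_CV V r par c1 (sub_in V r par S w) d x \<Longrightarrow> in_CV V r par c1 S d x"

definition CV :: "'a set \<Rightarrow> 'a \<Rightarrow> ('a \<Rightarrow> 'a) \<Rightarrow> ('a \<Rightarrow> 'a) \<Rightarrow> 'a set \<Rightarrow> real \<Rightarrow> 'a set" where
  "CV V r par c1 S d = {x. in_CV V r par c1 S d x}"

definition Cset :: "'a set \<Rightarrow> 'a \<Rightarrow> ('a \<Rightarrow> 'a) \<Rightarrow> ('a \<Rightarrow> 'a) \<Rightarrow> nat \<Rightarrow> 'a set \<Rightarrow> 'a set" where
  "Cset V r par c1 k S =
     (if real k \<ge> real (card S) / 2 - 1 then S
      else CV V r par c1 S (real (card S) / real k) \<union>
           {lend V r par c1 S (rt r par S), rt r par S})"

definition is_component :: "'a set \<Rightarrow> 'a \<Rightarrow> ('a \<Rightarrow> 'a) \<Rightarrow> 'a set \<Rightarrow> 'a set \<Rightarrow> bool" where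
  "is_component V r par A B \<longleftrightarrow> B \<subseteq> A \<and> B \<noteq> {} \<and> tconnected V r par B \<and>
     (\<forall>B'. B \<subseteq> B' \<and> B' \<subseteq> A \<and> tconnected V r par B' \<longrightarrow> B' = B)"

inductive canonical :: "'a set \<Rightarrow> 'a \<Rightarrow> ('a \<Rightarrow> 'a) \<Rightarrow> ('a \<Rightarrow> 'a) \<Rightarrow> nat \<Rightarrow> 'a set \<Rightarrow> bool"
  for V r par c1 k where
  can_top: "canonical V r par c1 k V"
| can_comp: "canonical V r par c1 k S \<Longrightarrow> is_component V r par (S - Cset V r par c1 k S) S' \<Longrightarrow>
     canonical V r par c1 k S'"

definition Tsup :: "'a set \<Rightarrow> 'a \<Rightarrow> ('a \<Rightarrow> 'a) \<Rightarrow> ('a \<Rightarrow> 'a) \<Rightarrow> nat \<Rightarrow> 'a \<Rightarrow> 'a set" where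
  "Tsup V r par c1 k v = (THE S. canonical V r par c1 k S \<and> v \<in> Cset V r par c1 k S)"

definition G_adj :: "'a set \<Rightarrow> 'a \<Rightarrow> ('a \<Rightarrow> 'a) \<Rightarrow> ('a \<Rightarrow> 'a) \<Rightarrow> nat \<Rightarrow> 'a \<Rightarrow> 'a \<Rightarrow> bool" where
  "G_adj V r par c1 k a b \<longleftrightarrow> a \<in> V \<and> b \<in> V \<and> a \<noteq> b \<and>
     (tree_adj V r par a b \<or>
      (\<exists>S. canonical V r par c1 k S \<and> a \<in> Cset V r par c1 k S \<and> b \<in> Cset V r par c1 k S))"

definition deepest :: "'a \<Rightarrow> ('a \<Rightarrow> 'a) \<Rightarrow> 'a set \<Rightarrow> 'a" where
  "deepest r par X = (THE x. x \<in> X \<and> (\<forall>y\<in>X. depth r par y \<le> depth r par x))"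

definition highest :: "'a \<Rightarrow> ('a \<Rightarrow> 'a) \<Rightarrow> 'a set \<Rightarrow> 'a" where
  "highest r par X = (THE x. x \<in> X \<and> (\<forall>y\<in>X. depth r par x \<le> depth r par y))"

text \<open>The list of vertices visited (in order) when one case of the routing
algorithm is executed at current vertex u with destination v.\<close>
definition route_step :: "'a set \<Rightarrow> 'a \<Rightarrow> ('a \<Rightarrow> 'a) \<Rightarrow> ('a \<Rightarrow> 'a) \<Rightarrow> nat \<Rightarrow> 'a \<Rightarrow> 'a \<Rightarrow> 'a list" where
  "route_step V r par c1 k u v =
    (if G_adj V r par c1 k u v then [v]
     else let C = Cset V r par c1 k (Tsup V r par c1 k u) in
     if anc V r par u v then
       (let x = deepest r par {x\<in>C. anc V r par x v} in
        [x, THE c. is_child V r par c x \<and> anc V r par c v])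
     else if anc V r par v u then
       (let x = highest r par {x\<in>C. anc V r par v x \<and> anc V r par x u} in [x, par x])
     else
       (let X = {x\<in>C. anc V r par x v \<and> \<not> anc V r par x u};
            Y = {y\<in>C. anc V r par y u \<and> \<not> anc V r par y v};
            y = highest r par Y in
        if X = {} then [y, par y]
        else (let x = deepest r par X in
              [x, THE c. is_child V r par c x \<and> anc V r par c v])))"

definition is_tree_path :: "'a set \<Rightarrow> 'a \<Rightarrow> ('a \<Rightarrow> 'a) \<Rightarrow> 'a list \<Rightarrow> 'a \<Rightarrow> 'a \<Rightarrow> bool" where
  "is_tree_path V r par xs u v \<longleftrightarrow> xs \<noteq> [] \<and> hd xs = u \<and> last xs = v \<and> distinct xs \<and>
     set xs \<subseteq> V \<and> (\<forall>i. Suc i < length xs \<longrightarrow> tree_adj V r par (xs ! i) (xs ! Suc i))"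

end

theory Submission
  imports Defs "HOL-Library.Sublist"
begin

text \<open>Each case of the routing algorithm either moves straight to the target v or
crosses a single edge of the tree path P(u,v), so the visited vertices are
consecutive on that path. In Cases 2 and 3a the chosen vertex is an ancestor of u
but not of v, and P(u,v) climbs from it to its parent; in Cases 1 and 3b it is an
ancestor of v whose child towards v is not an ancestor of u, and P(u,v) descends
from it into that child. The vertex exists because u lies in C_R for R = T^u and v
does not (unless u and v are adjacent in G); here T^u is well defined because
canonical subtrees are nested: one of recursion level n+1 lies inside one of
level n and avoids its C_R.\<close>

lemma successively_iff_nth:
  "successively P xs \<longleftrightarrow> (\<forall>i. Suc i < length xs \<longrightarrow> P (xs ! i) (xs ! Suc i))"
proof (induction P xs rule: successively.induct)
  case (3 P x y xs)
  then show ?case by (auto simp: All_less_Suc2 less_Suc_eq_0_disj)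
qed auto

lemma funpow_add_apply: "(f ^^ m) ((f ^^ n) x) = (f ^^ (m + n)) x"
  by (simp add: funpow_add)

lemma sublist_ordered_nth:
  assumes "sublist ys xs" "j1 \<le> j2" "j2 < length ys"
  shows "\<exists>i1 i2. i1 \<le> i2 \<and> i2 < length xs \<and> ys ! j1 = xs ! i1 \<and> ys ! j2 = xs ! i2"
proof -
  obtain ps ss where "xs = ps @ ys @ ss"
    using assms(1) unfolding sublist_def by blast
  then show ?thesis
    using assms(2,3)
    by (intro exI[of _ "length ps + j1"] exI[of _ "length ps + j2"]) (auto simp: nth_append)
qed

lemma tree_adj_commute: "tree_adj V r par a b \<longleftrightarrow> tree_adj V r par b a"
  unfolding tree_adj_def by blast

lemma is_tree_path_iff_successively:
  "is_tree_path V r par xs u v \<longleftrightarrow> xs \<noteq> [] \<and> hd xs = u \<and> last xs = v \<and> distinct xs \<and>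
     set xs \<subseteq> V \<and> successively (tree_adj V r par) xs"
  unfolding is_tree_path_def successively_iff_nth ..

lemma is_tree_path_singleton: "is_tree_path V r par [x] u v \<longleftrightarrow> x = u \<and> x = v \<and> x \<in> V"
  unfolding is_tree_path_iff_successively by auto

lemma is_tree_path_Cons_Cons:
  "is_tree_path V r par (x # y # ys) u v \<longleftrightarrow>
     x = u \<and> x \<in> V \<and> x \<notin> set (y # ys) \<and> tree_adj V r par x y \<and> is_tree_path V r par (y # ys) y v"
  unfolding is_tree_path_iff_successively by auto

lemma is_tree_path_hd_in_V: "is_tree_path V r par xs u v \<Longrightarrow> u \<in> V"
  unfolding is_tree_path_def by auto

lemma is_tree_path_rev: "is_tree_path V r par xs u v \<Longrightarrow> is_tree_path V r par (rev xs) v u"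
  unfolding is_tree_path_iff_successively
  by (auto simp: hd_rev last_rev tree_adj_commute[of V r par _])

locale rooted_tree =
  fixes V :: "'a set" and r :: 'a and par :: "'a \<Rightarrow> 'a"
  assumes rooted_tree: "is_rooted_tree V r par"
begin

abbreviation ancestor (infix "\<preceq>" 50) where "a \<preceq> b \<equiv> anc V r par a b"

lemma finite_V: "finite V"
  and root_in_V: "r \<in> V"
  and par_in_V: "v \<in> V \<Longrightarrow> v \<noteq> r \<Longrightarrow> par v \<in> V"
  using rooted_tree unfolding is_rooted_tree_def by auto

lemma funpow_depth_eq_root: "v \<in> V \<Longrightarrow> (par ^^ depth r par v) v = r"
  using rooted_tree unfolding is_rooted_tree_def depth_def by (metis (mono_tags) LeastI_ex)

lemma funpow_neq_root_if_less_depth: "k < depth r par v \<Longrightarrow> (par ^^ k) v \<noteq> r"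
  unfolding depth_def by (rule not_less_Least)

lemma depth_le_if_funpow_eq_root: "(par ^^ k) v = r \<Longrightarrow> depth r par v \<le> k"
  unfolding depth_def by (rule Least_le)

lemma funpow_par_in_V: "v \<in> V \<Longrightarrow> k \<le> depth r par v \<Longrightarrow> (par ^^ k) v \<in> V"
proof (induction k)
  case (Suc k)
  then show ?case
    using funpow_neq_root_if_less_depth[of k v] by (simp add: par_in_V)
qed simp

lemma depth_funpow_par:
  assumes "v \<in> V" "k \<le> depth r par v"
  shows "depth r par ((par ^^ k) v) = depth r par v - k"
proof (rule antisym)
  have "(par ^^ (depth r par v - k)) ((par ^^ k) v) = r"
    using assms funpow_depth_eq_root[of v] by (simp add: funpow_add_apply)
  then show "depth r par ((par ^^ k) v) \<le> depth r par v - k"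
    by (rule depth_le_if_funpow_eq_root)
  have "(par ^^ (depth r par ((par ^^ k) v) + k)) v = r"
    using funpow_depth_eq_root[OF funpow_par_in_V[OF assms]] by (simp add: funpow_add)
  then show "depth r par v - k \<le> depth r par ((par ^^ k) v)"
    using funpow_neq_root_if_less_depth by (meson not_le le_diff_conv)
qed

lemma depth_eq_0_iff: "v \<in> V \<Longrightarrow> depth r par v = 0 \<longleftrightarrow> v = r"
  using funpow_depth_eq_root[of v] depth_le_if_funpow_eq_root[of 0 v] by auto

lemma depth_par: "v \<in> V \<Longrightarrow> v \<noteq> r \<Longrightarrow> Suc (depth r par (par v)) = depth r par v"
  using depth_funpow_par[of v 1] depth_eq_0_iff[of v] by simp

lemma anc_in_V: "a \<preceq> b \<Longrightarrow> a \<in> V" "a \<preceq> b \<Longrightarrow> b \<in> V"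
  unfolding anc_def using funpow_par_in_V by auto

lemma anc_refl: "a \<in> V \<Longrightarrow> a \<preceq> a"
  unfolding anc_def by (auto intro: exI[of _ 0])

lemma root_anc: "v \<in> V \<Longrightarrow> r \<preceq> v"
  unfolding anc_def using funpow_depth_eq_root by blast

lemma par_anc: "v \<in> V \<Longrightarrow> v \<noteq> r \<Longrightarrow> par v \<preceq> v"
  unfolding anc_def using depth_eq_0_iff[of v] by (auto intro!: exI[of _ 1])

lemma child_anc: "is_child V r par c p \<Longrightarrow> p \<preceq> c"
  unfolding is_child_def using par_anc by blast

lemma anc_depth_le: "a \<preceq> b \<Longrightarrow> depth r par a \<le> depth r par b"
  unfolding anc_def using depth_funpow_par by auto

lemma anc_depth_eq:
  assumes "a \<preceq> b" "depth r par a = depth r par b"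
  shows "a = b"
proof -
  obtain k where k: "b \<in> V" "k \<le> depth r par b" "(par ^^ k) b = a"
    using assms(1) unfolding anc_def by blast
  then have "k = 0"
    using assms(2) depth_funpow_par[of b k] by simp
  then show ?thesis
    using k by simp
qed

lemma anc_antisym: "a \<preceq> b \<Longrightarrow> b \<preceq> a \<Longrightarrow> a = b"
  using anc_depth_le anc_depth_eq by (meson antisym)

lemma anc_trans:
  assumes "a \<preceq> b" "b \<preceq> c"
  shows "a \<preceq> c"
proof -
  obtain k where k: "c \<in> V" "k \<le> depth r par c" "(par ^^ k) c = b"
    using assms(2) unfolding anc_def by blast
  obtain m where m: "m \<le> depth r par b" "(par ^^ m) b = a"
    using assms(1) unfolding anc_def by blast
  have "m + k \<le> depth r par c" "(par ^^ (m + k)) c = a"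
    using k m depth_funpow_par[of c k] by (auto simp: funpow_add)
  then show ?thesis
    using k(1) unfolding anc_def by blast
qed

lemma anc_if_depth_le:
  assumes "a \<preceq> c" "b \<preceq> c" "depth r par a \<le> depth r par b"
  shows "a \<preceq> b"
proof -
  obtain i where i: "c \<in> V" "i \<le> depth r par c" "(par ^^ i) c = a"
    using assms(1) unfolding anc_def by blast
  obtain j where j: "j \<le> depth r par c" "(par ^^ j) c = b"
    using assms(2) unfolding anc_def by blast
  have "j \<le> i"
    using assms(3) i j depth_funpow_par[of c] by auto
  then have "(par ^^ (i - j)) b = a" "i - j \<le> depth r par b"
    using i j depth_funpow_par[of c j] by (auto simp: funpow_add_apply)
  then show ?thesis
    using assms(2) anc_in_V unfolding anc_def by blast
qed

lemma anc_linear: "a \<preceq> c \<Longrightarrow> b \<preceq> c \<Longrightarrow> a \<preceq> b \<or> b \<preceq> a"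
  using anc_if_depth_le nat_le_linear by blast

lemma anc_eq_if_depth_eq: "a \<preceq> c \<Longrightarrow> b \<preceq> c \<Longrightarrow> depth r par a = depth r par b \<Longrightarrow> a = b"
  using anc_if_depth_le[of a c b] anc_depth_eq[of a b] by simp

lemma anc_par_if_proper_anc:
  assumes "a \<preceq> b" "a \<noteq> b"
  shows "a \<preceq> par b"
proof -
  obtain k where k: "b \<in> V" "k \<le> depth r par b" "(par ^^ k) b = a"
    using assms(1) unfolding anc_def by blast
  then obtain k' where "k = Suc k'"
    using assms(2) by (cases k) auto
  then have "b \<noteq> r" "(par ^^ k') (par b) = a"
    using k depth_eq_0_iff[of b] by (auto simp: funpow_swap1)
  moreover have "k' \<le> depth r par (par b)"
    using \<open>k = Suc k'\<close> k depth_par[of b] \<open>b \<noteq> r\<close> by simp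
  ultimately show ?thesis
    using par_in_V[OF k(1)] unfolding anc_def by blast
qed

lemma deepest_of_anc_chain:
  assumes "X \<noteq> {}" "\<And>x. x \<in> X \<Longrightarrow> x \<preceq> c"
  shows "deepest r par X \<in> X" "\<And>y. y \<in> X \<Longrightarrow> depth r par y \<le> depth r par (deepest r par X)"
proof -
  obtain x0 where "x0 \<in> X"
    using assms(1) by blast
  moreover have "\<forall>y. y \<in> X \<longrightarrow> depth r par y < Suc (depth r par c)"
    using assms(2) anc_depth_le by (simp add: le_imp_less_Suc)
  ultimately obtain x where x: "x \<in> X" "\<forall>y. y \<in> X \<longrightarrow> depth r par y \<le> depth r par x"
    using ex_has_greatest_nat[of "\<lambda>y. y \<in> X" x0 "depth r par"] by blast
  have "deepest r par X = x"
    unfolding deepest_def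
  proof (rule the_equality)
    fix x'
    assume "x' \<in> X \<and> (\<forall>y\<in>X. depth r par y \<le> depth r par x')"
    then show "x' = x"
      using x assms(2) anc_eq_if_depth_eq[of x' c x] by (simp add: antisym)
  qed (use x in blast)
  then show "deepest r par X \<in> X" "\<And>y. y \<in> X \<Longrightarrow> depth r par y \<le> depth r par (deepest r par X)"
    using x by auto
qed

lemma highest_of_anc_chain:
  assumes "X \<noteq> {}" "\<And>x. x \<in> X \<Longrightarrow> x \<preceq> c"
  shows "highest r par X \<in> X"
proof -
  obtain x where x: "x \<in> X" "\<forall>y. y \<in> X \<longrightarrow> depth r par x \<le> depth r par y"
    using assms(1) ex_has_least_nat[of "\<lambda>y. y \<in> X" _ "depth r par"] by blast
  have "highest r par X = x"
    unfolding highest_def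
  proof (rule the_equality)
    fix x'
    assume "x' \<in> X \<and> (\<forall>y\<in>X. depth r par x' \<le> depth r par y)"
    then show "x' = x"
      using x assms(2) anc_eq_if_depth_eq[of x' c x] by (simp add: antisym)
  qed (use x in blast)
  with x(1) show ?thesis
    by simp
qed

lemma child_toward:
  assumes "x \<preceq> v" "x \<noteq> v"
  defines "c \<equiv> THE c. is_child V r par c x \<and> c \<preceq> v"
  shows "is_child V r par c x" "c \<preceq> v"
proof -
  obtain k where k: "v \<in> V" "k \<le> depth r par v" "(par ^^ k) v = x"
    using assms(1) unfolding anc_def by blast
  then obtain k' where "k = Suc k'"
    using assms(2) by (cases k) auto
  define c0 where "c0 = (par ^^ k') v"
  have c0: "c0 \<in> V" "c0 \<noteq> r" "par c0 = x"
    using k \<open>k = Suc k'\<close> funpow_par_in_V[of v k'] depth_funpow_par[of v k'] depth_eq_0_iff[of c0]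
    unfolding c0_def by auto
  have "c0 \<preceq> v"
    using k \<open>k = Suc k'\<close> unfolding c0_def anc_def by (auto intro!: exI[of _ k'])
  have child: "is_child V r par c0 x"
    using c0 unfolding is_child_def by blast
  have "c = c0"
    unfolding c_def
  proof (rule the_equality)
    fix c'
    assume c': "is_child V r par c' x \<and> c' \<preceq> v"
    then have "depth r par c' = depth r par c0"
      using depth_par[of c'] depth_par[of c0] c0 unfolding is_child_def by auto
    then show "c' = c0"
      using c' \<open>c0 \<preceq> v\<close> anc_eq_if_depth_eq by blast
  qed (use child \<open>c0 \<preceq> v\<close> in blast)
  then show "is_child V r par c x" "c \<preceq> v"
    using child \<open>c0 \<preceq> v\<close> by auto
qed

lemma anc_if_tree_path_avoids_par:
  "is_tree_path V r par xs y v \<Longrightarrow> par y \<notin> set xs \<Longrightarrow> y \<preceq> v"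
proof (induction xs arbitrary: y)
  case (Cons x xs)
  show ?case
  proof (cases xs)
    case Nil
    then show ?thesis
      using Cons.prems by (auto simp: is_tree_path_singleton intro: anc_refl)
  next
    case (Cons z zs)
    with Cons.prems have path:
      "x = y" "y \<notin> set xs" "tree_adj V r par y z" "is_tree_path V r par xs z v"
      by (auto simp: is_tree_path_Cons_Cons)
    then have child: "is_child V r par z y"
      using Cons.prems(2) \<open>xs = z # zs\<close> unfolding tree_adj_def is_child_def by auto
    then have "z \<preceq> v"
      using Cons.IH path by (auto simp: is_child_def)
    then show ?thesis
      using child_anc[OF child] anc_trans by blast
  qed
qed (simp add: is_tree_path_def)

lemma tree_path_up_edge:
  "is_tree_path V r par xs u v \<Longrightarrow> a \<preceq> u \<Longrightarrow> \<not> a \<preceq> v \<Longrightarrow> sublist [a, par a] xs"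
proof (induction xs arbitrary: u)
  case (Cons x xs)
  show ?case
  proof (cases xs)
    case Nil
    then show ?thesis
      using Cons.prems by (auto simp: is_tree_path_singleton)
  next
    case (Cons y ys)
    with Cons.prems have path:
      "x = u" "u \<notin> set xs" "tree_adj V r par u y" "is_tree_path V r par xs y v"
      by (auto simp: is_tree_path_Cons_Cons)
    have "\<not> u \<preceq> v"
      using Cons.prems anc_trans by blast
    then have "\<not> is_child V r par y u"
      using anc_if_tree_path_avoids_par[OF path(4)] path(2) child_anc anc_trans
      unfolding is_child_def by blast
    then have "y = par u"
      using path(3) unfolding tree_adj_def is_child_def by auto
    show ?thesis
    proof (cases "a = u")
      case True
      then show ?thesis
        using path(1) \<open>xs = y # ys\<close> \<open>y = par u\<close> by (simp add: sublist_Cons_right)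
    next
      case False
      then have "a \<preceq> y"
        using Cons.prems(2) \<open>y = par u\<close> anc_par_if_proper_anc by blast
      then show ?thesis
        using Cons.IH path(4) Cons.prems(3) by (auto simp: sublist_Cons_right)
    qed
  qed
qed (simp add: is_tree_path_def)

lemma tree_path_down_edge:
  assumes "is_tree_path V r par xs u v" "a \<preceq> v" "\<not> a \<preceq> u"
  shows "sublist [par a, a] xs"
proof -
  have "sublist [a, par a] (rev xs)"
    using tree_path_up_edge[OF is_tree_path_rev[OF assms(1)] assms(2,3)] .
  then show ?thesis
    by (simp add: sublist_rev_right)
qed

lemma tree_path_child_toward_edge:
  assumes path: "is_tree_path V r par xs u v" and "x \<preceq> v" "x \<noteq> v" "\<not> x \<preceq> u \<or> u \<preceq> x"
  shows "sublist [x, THE c. is_child V r par c x \<and> c \<preceq> v] xs"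
proof -
  define c where "c = (THE c. is_child V r par c x \<and> c \<preceq> v)"
  have "is_child V r par c x" "c \<preceq> v"
    using child_toward[OF assms(2,3)] unfolding c_def by auto
  then have c: "c \<in> V" "c \<noteq> r" "par c = x" "x \<preceq> c"
    using child_anc unfolding is_child_def by auto
  then have "x \<noteq> c"
    using depth_par[of c] by auto
  have "\<not> c \<preceq> u"
  proof
    assume "c \<preceq> u"
    then show False
      using assms(4) c(4) \<open>x \<noteq> c\<close> anc_trans anc_antisym by blast
  qed
  then show ?thesis
    using tree_path_down_edge[OF path \<open>c \<preceq> v\<close>] c(3) unfolding c_def by simp
qed

lemma tree_path_deepest_anc_edge:
  assumes path: "is_tree_path V r par xs u v" and "u \<in> X" "v \<notin> X" "u \<preceq> v"
  defines "x \<equiv> deepest r par {x \<in> X. x \<preceq> v}"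
  shows "sublist [x, THE c. is_child V r par c x \<and> c \<preceq> v] xs"
proof -
  have nonempty: "{x \<in> X. x \<preceq> v} \<noteq> {}"
    using assms(2,4) by blast
  have "x \<in> X" "x \<preceq> v" "depth r par u \<le> depth r par x"
    using deepest_of_anc_chain[OF nonempty, of v] assms(2,4) unfolding x_def by auto
  moreover from this have "u \<preceq> x"
    using anc_if_depth_le[OF assms(4)] by blast
  ultimately show ?thesis
    using tree_path_child_toward_edge[OF path, of x] assms(3) by auto
qed

lemma tree_path_highest_between_edge:
  assumes path: "is_tree_path V r par xs u v" and "u \<in> X" "v \<notin> X" "v \<preceq> u"
  defines "x \<equiv> highest r par {x \<in> X. v \<preceq> x \<and> x \<preceq> u}"
  shows "sublist [x, par x] xs"
proof -
  have "u \<preceq> u"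
    using anc_refl is_tree_path_hd_in_V[OF path] .
  then have nonempty: "{x \<in> X. v \<preceq> x \<and> x \<preceq> u} \<noteq> {}"
    using assms(2,4) by blast
  have "x \<in> X" "v \<preceq> x" "x \<preceq> u"
    using highest_of_anc_chain[OF nonempty, of u] unfolding x_def by auto
  moreover from this have "\<not> x \<preceq> v"
    using anc_antisym[of x v] assms(3) by auto
  ultimately show ?thesis
    using tree_path_up_edge[OF path] by blast
qed

lemma tree_path_highest_separating_edge:
  assumes path: "is_tree_path V r par xs u v" and "u \<in> X" "\<not> u \<preceq> v"
  defines "y \<equiv> highest r par {y \<in> X. y \<preceq> u \<and> \<not> y \<preceq> v}"
  shows "sublist [y, par y] xs"
proof -
  have "u \<preceq> u"
    using anc_refl is_tree_path_hd_in_V[OF path] .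
  then have nonempty: "{y \<in> X. y \<preceq> u \<and> \<not> y \<preceq> v} \<noteq> {}"
    using assms(2,3) by blast
  have "y \<preceq> u" "\<not> y \<preceq> v"
    using highest_of_anc_chain[OF nonempty, of u] unfolding y_def by auto
  then show ?thesis
    by (rule tree_path_up_edge[OF path])
qed

lemma tree_path_deepest_separating_edge:
  assumes path: "is_tree_path V r par xs u v" and "v \<notin> X"
    and nonempty: "{x \<in> X. x \<preceq> v \<and> \<not> x \<preceq> u} \<noteq> {}"
  defines "x \<equiv> deepest r par {x \<in> X. x \<preceq> v \<and> \<not> x \<preceq> u}"
  shows "sublist [x, THE c. is_child V r par c x \<and> c \<preceq> v] xs"
proof -
  have "x \<in> X" "x \<preceq> v" "\<not> x \<preceq> u"
    using deepest_of_anc_chain(1)[OF nonempty, of v] unfolding x_def by auto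
  then show ?thesis
    using tree_path_child_toward_edge[OF path, of x] assms(2) by auto
qed

lemma greatest_common_anc:
  assumes "a \<in> V" "b \<in> V"
  obtains z where "z \<preceq> a" "z \<preceq> b" "\<And>y. y \<preceq> a \<Longrightarrow> y \<preceq> b \<Longrightarrow> y \<preceq> z"
proof -
  let ?common = "\<lambda>y. y \<preceq> a \<and> y \<preceq> b"
  have "?common r"
    using assms root_anc by blast
  moreover have "\<forall>y. ?common y \<longrightarrow> depth r par y < Suc (depth r par a)"
    using anc_depth_le by (simp add: le_imp_less_Suc)
  ultimately obtain z where z: "?common z" "\<forall>y. ?common y \<longrightarrow> depth r par y \<le> depth r par z"
    using ex_has_greatest_nat[of ?common r "depth r par"] by blast
  have "y \<preceq> z" if "y \<preceq> a" "y \<preceq> b" for y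
    using anc_if_depth_le[of y a z] that z by blast
  with z(1) show ?thesis
    using that by blast
qed

lemma on_path_commute: "on_path V r par a b w \<longleftrightarrow> on_path V r par b a w"
  unfolding on_path_def by blast

lemma on_path_split_if_anc:
  assumes path: "on_path V r par a b w" and "w \<preceq> a" "c \<in> V"
  shows "on_path V r par a c w \<or> on_path V r par c b w"
proof (cases "w \<preceq> c")
  case False
  have "z \<preceq> w" if "z \<preceq> a" "z \<preceq> c" for z
    using anc_linear[OF that(1) \<open>w \<preceq> a\<close>] that(2) False anc_trans by blast
  then show ?thesis
    using \<open>w \<preceq> a\<close> unfolding on_path_def by blast
next
  case True
  \<comment> \<open>m is where the paths to a and c part; if w lies strictly above m, then w is on P(c,b)\<close>
  obtain m where m: "m \<preceq> a" "m \<preceq> c" "\<And>y. y \<preceq> a \<Longrightarrow> y \<preceq> c \<Longrightarrow> y \<preceq> m"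
    using greatest_common_anc[OF anc_in_V(2)[OF \<open>w \<preceq> a\<close>] \<open>c \<in> V\<close>] by blast
  have below_ab: "z \<preceq> w" if "z \<preceq> a" "z \<preceq> b" for z
    using path that unfolding on_path_def by blast
  show ?thesis
  proof (cases "w = m")
    case True
    then show ?thesis
      using m \<open>w \<preceq> a\<close> unfolding on_path_def by blast
  next
    case False
    have "w \<preceq> m"
      using m(3) \<open>w \<preceq> a\<close> True .
    have "z \<preceq> w" if z: "z \<preceq> c" "z \<preceq> b" for z
      using anc_linear[OF z(1) m(2)]
    proof
      assume "z \<preceq> m"
      then show ?thesis
        using below_ab m(1) z(2) anc_trans by blast
    next
      assume "m \<preceq> z"
      then have "m \<preceq> w"
        using below_ab m(1) z(2) anc_trans by blast
      then show ?thesis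
        using \<open>w \<preceq> m\<close> \<open>w \<noteq> m\<close> anc_antisym by blast
    qed
    then show ?thesis
      using True unfolding on_path_def by blast
  qed
qed

lemma on_path_split:
  assumes "on_path V r par a b w" "c \<in> V"
  shows "on_path V r par a c w \<or> on_path V r par c b w"
proof -
  have "w \<preceq> a \<or> w \<preceq> b"
    using assms(1) unfolding on_path_def by blast
  then show ?thesis
    using on_path_split_if_anc[OF assms(1) _ assms(2)]
      on_path_split_if_anc[of b a w c] assms on_path_commute by blast
qed

lemma tconnected_Union:
  assumes "\<And>B. B \<in> F \<Longrightarrow> tconnected V r par B \<and> c \<in> B" "c \<in> V"
  shows "tconnected V r par (\<Union>F)"
  unfolding tconnected_def
proof (intro ballI allI impI)
  fix a b w
  assume "a \<in> \<Union>F" "b \<in> \<Union>F" and path: "on_path V r par a b w"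
  then obtain A B where "A \<in> F" "a \<in> A" "B \<in> F" "b \<in> B"
    by blast
  then show "w \<in> \<Union>F"
    using on_path_split[OF path assms(2)] assms(1) unfolding tconnected_def by blast
qed

lemma tconnected_V: "tconnected V r par V"
  unfolding tconnected_def on_path_def by (meson anc_in_V(1))

lemma tconnected_singleton: "u \<in> V \<Longrightarrow> tconnected V r par {u}"
  unfolding tconnected_def on_path_def using anc_refl anc_antisym by simp

lemma component_unique:
  assumes "A \<subseteq> V" "is_component V r par A B1" "is_component V r par A B2" "c \<in> B1" "c \<in> B2"
  shows "B1 = B2"
proof -
  have "tconnected V r par (\<Union>{B1, B2})"
    using assms unfolding is_component_def by (intro tconnected_Union) auto
  then have "B1 \<union> B2 = B1" "B1 \<union> B2 = B2"
    using assms(2,3) unfolding is_component_def by auto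
  then show ?thesis
    by simp
qed

lemma component_exists:
  assumes "A \<subseteq> V" "u \<in> A"
  obtains B where "is_component V r par A B" "u \<in> B"
proof -
  define F where "F = {B. B \<subseteq> A \<and> u \<in> B \<and> tconnected V r par B}"
  have "{u} \<in> F"
    using assms tconnected_singleton unfolding F_def by blast
  moreover have "tconnected V r par (\<Union>F)"
    using assms by (intro tconnected_Union[of F u]) (auto simp: F_def)
  ultimately have "is_component V r par A (\<Union>F)"
    unfolding is_component_def F_def by blast
  moreover have "u \<in> \<Union>F"
    using \<open>{u} \<in> F\<close> by blast
  ultimately show ?thesis
    using that by blast
qed

lemma rt_eqI:
  assumes "x \<in> S" "\<And>y. y \<in> S \<Longrightarrow> x \<preceq> y"
  shows "rt r par S = x"
  unfolding rt_def
proof (rule the_equality)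
  show "x \<in> S \<and> (\<forall>y\<in>S. depth r par x \<le> depth r par y)"
    using assms anc_depth_le by blast
  fix x'
  assume "x' \<in> S \<and> (\<forall>y\<in>S. depth r par x' \<le> depth r par y)"
  then have "x \<preceq> x'" "depth r par x' \<le> depth r par x"
    using assms by auto
  then show "x' = x"
    using anc_depth_le[of x x'] anc_depth_eq[of x x'] by simp
qed

lemma rt_in:
  assumes "S \<subseteq> V" "S \<noteq> {}" "tconnected V r par S"
  shows "rt r par S \<in> S"
proof -
  obtain x where x: "x \<in> S" "\<And>y. y \<in> S \<Longrightarrow> depth r par x \<le> depth r par y"
    using assms(2) ex_has_least_nat[of "\<lambda>y. y \<in> S" _ "depth r par"] by blast
  have "x \<preceq> y" if "y \<in> S" for y
  proof -
    obtain z where z: "z \<preceq> x" "z \<preceq> y" "\<And>w. w \<preceq> x \<Longrightarrow> w \<preceq> y \<Longrightarrow> w \<preceq> z"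
      using greatest_common_anc[of x y] assms(1) x(1) \<open>y \<in> S\<close> by blast
    then have "on_path V r par x y z"
      unfolding on_path_def by blast
    then have "z \<in> S"
      using assms(3) x(1) \<open>y \<in> S\<close> unfolding tconnected_def by blast
    then have "z = x"
      using x(2) anc_depth_le[OF z(1)] anc_depth_eq[OF z(1)] by force
    then show ?thesis
      using z(2) by simp
  qed
  then have "rt r par S = x"
    using x(1) by (intro rt_eqI)
  with x(1) show ?thesis
    by simp
qed

end

locale canonical_subtrees = rooted_tree +
  fixes c1 :: "'a \<Rightarrow> 'a" and k :: nat
begin

abbreviation C where "C S \<equiv> Cset V r par c1 k S"

abbreviation canon where "canon S \<equiv> canonical V r par c1 k S"

lemma c1_funpow_in: "v \<in> S \<Longrightarrow> j \<le> pathlen V r par c1 S v \<Longrightarrow> (c1 ^^ j) v \<in> S"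
proof (induction j)
  case (Suc j)
  then have "j < pathlen V r par c1 S v"
    by simp
  then have "lm_in V r par c1 S ((c1 ^^ j) v)"
    unfolding pathlen_def by (rule not_less_Least[THEN notnotD])
  then show ?case
    unfolding lm_in_def by simp
qed simp

lemma bfirst_in:
  assumes "v \<in> S" "bfirst V r par c1 S d v = Some b"
  shows "b \<in> S"
proof -
  let ?P = "\<lambda>j. j \<le> pathlen V r par c1 S v \<and> balanced V r par c1 S d ((c1 ^^ j) v)"
  have "\<exists>j. ?P j" "b = (c1 ^^ (LEAST j. ?P j)) v"
    using assms(2) unfolding bfirst_def by (auto split: if_splits)
  moreover from this(1) have "?P (LEAST j. ?P j)"
    by (rule LeastI_ex)
  ultimately show ?thesis
    using c1_funpow_in[OF assms(1)] by blast
qed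

lemma CV_subset:
  assumes "rt r par S \<in> S"
  shows "CV V r par c1 S d \<subseteq> S"
proof -
  have "in_CV V r par c1 S d x \<Longrightarrow> rt r par S \<in> S \<Longrightarrow> x \<in> S" for x
  proof (induction rule: in_CV.induct)
    case (cv_here S d b)
    then show ?case
      using bfirst_in by blast
  next
    case (cv_rec S d b w x)
    then have "w \<in> sub_in V r par S w" "\<And>y. y \<in> sub_in V r par S w \<Longrightarrow> w \<preceq> y"
      using anc_refl[of w] unfolding sub_in_def is_child_def by auto
    then have "rt r par (sub_in V r par S w) \<in> sub_in V r par S w"
      using rt_eqI by simp
    then show ?case
      using cv_rec.IH unfolding sub_in_def by blast
  qed
  then show ?thesis
    using assms unfolding CV_def by blast
qed

lemma canonical_tconnected: "canon S \<Longrightarrow> S \<subseteq> V \<and> S \<noteq> {} \<and> tconnected V r par S"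
proof (induction rule: canonical.induct)
  case can_top
  then show ?case
    using root_in_V tconnected_V by blast
qed (auto simp: is_component_def)

lemma rt_in_canonical: "canon S \<Longrightarrow> rt r par S \<in> S"
  using canonical_tconnected rt_in by blast

lemma Cset_subset:
  assumes "canon S"
  shows "C S \<subseteq> S"
proof -
  have "rt r par S \<in> S"
    using rt_in_canonical[OF assms] .
  moreover from this have "lend V r par c1 S (rt r par S) \<in> S"
    unfolding lend_def by (rule c1_funpow_in) simp
  ultimately show ?thesis
    using CV_subset[of S] unfolding Cset_def by auto
qed

lemma rt_in_Cset: "canon S \<Longrightarrow> rt r par S \<in> C S"
  using rt_in_canonical unfolding Cset_def by auto

inductive canonical_at :: "nat \<Rightarrow> 'a set \<Rightarrow> bool" where
  top: "canonical_at 0 V"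
| component: "canonical_at n S \<Longrightarrow> is_component V r par (S - C S) S' \<Longrightarrow> canonical_at (Suc n) S'"

lemma canonical_iff_canonical_at: "canon S \<longleftrightarrow> (\<exists>n. canonical_at n S)"
proof
  show "canon S \<Longrightarrow> \<exists>n. canonical_at n S"
    by (induction rule: canonical.induct) (auto intro: canonical_at.intros)
  have "canonical_at n S \<Longrightarrow> canon S" for n
    by (induction rule: canonical_at.induct) (auto intro: canonical.intros)
  then show "\<exists>n. canonical_at n S \<Longrightarrow> canon S"
    by blast
qed

lemma canonical_at_unique:
  "canonical_at n S1 \<Longrightarrow> canonical_at n S2 \<Longrightarrow> c \<in> S1 \<Longrightarrow> c \<in> S2 \<Longrightarrow> S1 = S2"
proof (induction arbitrary: S2 rule: canonical_at.induct)
  case top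
  then show ?case
    by (cases rule: canonical_at.cases) auto
next
  case (component n S S')
  from "component.prems"(1) obtain S0 where S0: "canonical_at n S0" "is_component V r par (S0 - C S0) S2"
    by (cases rule: canonical_at.cases) auto
  have "S' \<subseteq> S" "S2 \<subseteq> S0"
    using "component.hyps"(2) S0(2) unfolding is_component_def by auto
  then have "S = S0"
    using "component.IH"[OF S0(1)] "component.prems"(2,3) by blast
  moreover have "S0 \<subseteq> V"
    using S0(1) canonical_iff_canonical_at canonical_tconnected by blast
  ultimately show ?case
    using component_unique[of "S0 - C S0" S' S2 c] "component.hyps"(2) S0(2) "component.prems" by blast
qed

lemma canonical_at_nested:
  "canonical_at m S \<Longrightarrow> n < m \<Longrightarrow> \<exists>S0. canonical_at n S0 \<and> S \<subseteq> S0 - C S0"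
proof (induction arbitrary: n rule: canonical_at.induct)
  case (component m S S')
  then have "S' \<subseteq> S - C S"
    unfolding is_component_def by blast
  show ?case
  proof (cases "n = m")
    case True
    then show ?thesis
      using "component.hyps"(1) \<open>S' \<subseteq> S - C S\<close> by blast
  next
    case False
    then obtain S0 where "canonical_at n S0" "S \<subseteq> S0 - C S0"
      using "component.IH"[of n] "component.prems" by auto
    then show ?thesis
      using \<open>S' \<subseteq> S - C S\<close> by blast
  qed
qed simp

lemma canonical_Cset_unique:
  assumes "canon S1" "canon S2" "u \<in> C S1" "u \<in> C S2"
  shows "S1 = S2"
proof -
  have not_deeper: False
    if S1: "canonical_at n1 S1" "u \<in> C S1" and S2: "canonical_at n2 S2" "u \<in> S2" and "n1 < n2"
    for n1 n2 S1 S2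
  proof -
    obtain S0 where S0: "canonical_at n1 S0" "S2 \<subseteq> S0 - C S0"
      using canonical_at_nested[OF S2(1) \<open>n1 < n2\<close>] by blast
    have "u \<in> S1"
      using S1 Cset_subset canonical_iff_canonical_at by blast
    then have "S0 = S1"
      using canonical_at_unique[OF S0(1) S1(1)] S0(2) S2(2) by blast
    then show False
      using S0(2) S1(2) S2(2) by blast
  qed
  obtain n1 n2 where n: "canonical_at n1 S1" "canonical_at n2 S2"
    using assms(1,2) canonical_iff_canonical_at by blast
  have "u \<in> S1" "u \<in> S2"
    using assms Cset_subset by blast+
  then show ?thesis
  proof (cases n1 n2 rule: linorder_cases)
    case less
    then show ?thesis
      using not_deeper[OF n(1) assms(3) n(2) \<open>u \<in> S2\<close>] by blast
  next
    case equal
    then show ?thesis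
      using canonical_at_unique n \<open>u \<in> S1\<close> \<open>u \<in> S2\<close> by blast
  next
    case greater
    then show ?thesis
      using not_deeper[OF n(2) assms(4) n(1) \<open>u \<in> S1\<close>] by blast
  qed
qed

lemma canonical_Cset_exists: "canon S \<Longrightarrow> u \<in> S \<Longrightarrow> \<exists>S'. canon S' \<and> u \<in> C S'"
proof (induction "card S" arbitrary: S rule: less_induct)
  case less
  show ?case
  proof (cases "u \<in> C S")
    case False
    have "S \<subseteq> V"
      using canonical_tconnected[OF less.prems(1)] by blast
    then obtain B where B: "is_component V r par (S - C S) B" "u \<in> B"
      using component_exists[of "S - C S" u] less.prems(2) False by blast
    then have "B \<subseteq> S - {rt r par S}"
      using rt_in_Cset[OF less.prems(1)] unfolding is_component_def by blast
    moreover have "rt r par S \<in> S" "finite S"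
      using rt_in_canonical[OF less.prems(1)] finite_subset[OF \<open>S \<subseteq> V\<close> finite_V] by auto
    ultimately have "card B < card S"
      using card_mono[of "S - {rt r par S}" B] card_Diff1_less[of S "rt r par S"] by simp
    then show ?thesis
      using less.hyps canonical.can_comp[OF less.prems(1) B(1)] B(2) by blast
  qed (use less.prems in blast)
qed

lemma canonical_Tsup:
  assumes "u \<in> V"
  shows "canon (Tsup V r par c1 k u)" "u \<in> C (Tsup V r par c1 k u)"
proof -
  have "\<exists>!S. canon S \<and> u \<in> C S"
    using canonical_Cset_exists[OF canonical.can_top assms] canonical_Cset_unique by blast
  then have "canon (Tsup V r par c1 k u) \<and> u \<in> C (Tsup V r par c1 k u)"
    unfolding Tsup_def by (rule theI')
  then show "canon (Tsup V r par c1 k u)" "u \<in> C (Tsup V r par c1 k u)"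
    by auto
qed

lemma not_G_adj_Cset_Tsup:
  assumes "u \<in> V" "v \<in> V" "u \<noteq> v" "\<not> G_adj V r par c1 k u v"
  shows "u \<in> C (Tsup V r par c1 k u)" "v \<notin> C (Tsup V r par c1 k u)"
  using assms canonical_Tsup[OF assms(1)] unfolding G_adj_def by blast+

lemma route_step_sublist:
  assumes "u \<in> V" "v \<in> V" "u \<noteq> v" and path: "is_tree_path V r par xs u v"
  shows "sublist (route_step V r par c1 k u v) xs"
proof (cases "G_adj V r par c1 k u v")
  case True
  then have "route_step V r par c1 k u v = [v]"
    unfolding route_step_def by simp
  moreover have "xs = butlast xs @ [v]"
    using path unfolding is_tree_path_def by (metis append_butlast_last_id)
  ultimately show ?thesis
    by (metis sublist_append_leftI sublist_order.order_refl)
next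
  case False
  define Cu where "Cu = C (Tsup V r par c1 k u)"
  have u: "u \<in> Cu" and v: "v \<notin> Cu"
    using not_G_adj_Cset_Tsup[OF assms(1-3) False] unfolding Cu_def by auto
  note route = route_step_def Let_def Cu_def[symmetric] if_not_P[OF False]
  consider (down) "u \<preceq> v" | (up) "\<not> u \<preceq> v" "v \<preceq> u"
    | (over) "\<not> u \<preceq> v" "\<not> v \<preceq> u" "{x \<in> Cu. x \<preceq> v \<and> \<not> x \<preceq> u} = {}"
    | (across) "\<not> u \<preceq> v" "\<not> v \<preceq> u" "{x \<in> Cu. x \<preceq> v \<and> \<not> x \<preceq> u} \<noteq> {}"
    by blast
  then show ?thesis
  proof cases
    case down
    show ?thesis
      using tree_path_deepest_anc_edge[OF path u v down] unfolding route if_P[OF down] .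
  next
    case up
    show ?thesis
      using tree_path_highest_between_edge[OF path u v up(2)]
      unfolding route if_not_P[OF up(1)] if_P[OF up(2)] .
  next
    case over
    show ?thesis
      using tree_path_highest_separating_edge[OF path u over(1)]
      unfolding route if_not_P[OF over(1)] if_not_P[OF over(2)] if_P[OF over(3)] .
  next
    case across
    show ?thesis
      using tree_path_deepest_separating_edge[OF path v across(3)]
      unfolding route if_not_P[OF across(1)] if_not_P[OF across(2)] if_not_P[OF across(3)] .
  qed
qed

end

theorem lemma12:
  fixes V :: "'a set" and r :: 'a and par c1 :: "'a \<Rightarrow> 'a" and k :: nat
    and u v :: 'a and xs :: "'a list"
  assumes "is_rooted_tree V r par"
    and "leftmost_choice V r par c1"
    and "k \<ge> 4"
    and "u \<in> V" and "v \<in> V" and "u \<noteq> v"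
    and "is_tree_path V r par xs u v"
  shows "\<forall>j1 j2. j1 \<le> j2 \<and> j2 < length (route_step V r par c1 k u v) \<longrightarrow>
           (\<exists>i1 i2. i1 \<le> i2 \<and> i2 < length xs \<and>
              route_step V r par c1 k u v ! j1 = xs ! i1 \<and>
              route_step V r par c1 k u v ! j2 = xs ! i2)"
proof -
  interpret canonical_subtrees V r par c1 k
    by unfold_locales (fact assms(1))
  have "sublist (route_step V r par c1 k u v) xs"
    using route_step_sublist assms(4-7) .
  then show ?thesis
    using sublist_ordered_nth by blast
qed

end
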